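(* Let $1\le m\le n-1$, let $A\otimes B\in Y$, and let $\gamma\in\mathrm{GL}_{m(n-m)}(\mathbb{Z})$ be such that $(A\otimes B)\gamma\in Y$. Then $\gamma=\gamma_m\otimes\gamma_{n-m}$ with $\gamma_m\in\mathrm{GL}_m(\mathbb{Z})$ and $\gamma_{n-m}\in\mathrm{GL}_{n-m}(\mathbb{Z})$.
   Context: $Y=\{A\otimes B: A\in\mathrm{Mat}_{n\times m}(\mathbb{R}),B\in\mathrm{Mat}_{n\times(n-m)}(\mathbb{R})$ of full rank, column space of $A$ orthogonal to column space of $B\}$, where $A\otimes B=(a_{ij}B)_{i,j}$ denotes the Kronecker product (an $n^2\times m(n-m)$ matrix); similarly $\gamma_m\otimes\gamma_{n-m}$ is the Kronecker product. *)

theory Defs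
  imports "Jordan_Normal_Form.DL_Rank"
begin

definition kron_mat :: "'a :: times mat \<Rightarrow> 'a mat \<Rightarrow> 'a mat" where
  "kron_mat A B = mat (dim_row A * dim_row B) (dim_col A * dim_col B)
     (\<lambda>(i, j). A $$ (i div dim_row B, j div dim_col B) * B $$ (i mod dim_row B, j mod dim_col B))"

definition full_rank :: "nat \<Rightarrow> real mat \<Rightarrow> bool" where
  "full_rank n A \<longleftrightarrow> vec_space.rank n A = min (dim_row A) (dim_col A)"

definition col_orth :: "real mat \<Rightarrow> real mat \<Rightarrow> bool" where
  "col_orth A B \<longleftrightarrow> (\<forall>i < dim_col A. \<forall>j < dim_col B. col A i \<bullet> col B j = 0)"

definition Y_set :: "nat \<Rightarrow> nat \<Rightarrow> real mat set" where
  "Y_set n m = {kron_mat A B | A B. A \<in> carrier_mat n m \<and> B \<in> carrier_mat n (n - m)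
      \<and> full_rank n A \<and> full_rank n B \<and> col_orth A B}"

definition GL_int :: "nat \<Rightarrow> int mat set" where
  "GL_int k = {g. g \<in> carrier_mat k k \<and> invertible_mat g}"

end

theory Submission
  imports Defs
begin

(* Full column rank gives left inverses La, Lb of the factors of A0 (x) B0, so
   (A0 (x) B0) g = A1 (x) B1 forces g = (La A1) (x) (Lb B1): over the reals, gamma and its inverse
   are Kronecker products.  An integer matrix of the form P (x) Q is a Kronecker product of integer
   matrices c P and Q / c, where the numerator of c is the positive generator of a subgroup of Z.
   Finally (gamma1 delta1) (x) (gamma2 delta2) = 1 gives gamma1 and gamma2 one-sided, hence
   two-sided, integral inverses. *)

lemma block_index_less:
  fixes i s m k :: nat
  assumes "i < m" "s < k"
  shows "i * k + s < m * k"
proof -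
  have "i * k + s < Suc i * k" using assms by simp
  also have "\<dots> \<le> m * k" using assms by (intro mult_le_mono1) simp
  finally show ?thesis .
qed

lemma less_mult_imp_mod_less:
  fixes i a c :: nat
  shows "i < a * c \<Longrightarrow> i mod c < c"
  by (metis mod_less_divisor mult_0_right not_less_zero zero_less_iff_neq_zero)

lemma sum_lessThan_mult_div_mod:
  fixes g :: "nat \<Rightarrow> nat \<Rightarrow> 'a::comm_monoid_add"
  shows "(\<Sum>t<b * d. g (t div d) (t mod d)) = (\<Sum>s<b. \<Sum>u<d. g s u)"
proof -
  have "(\<Sum>t<b * d. g (t div d) (t mod d)) = (\<Sum>s<b. \<Sum>t\<in>{s * d..<s * d + d}. g (t div d) (t mod d))"
    by (rule sum.nat_group[symmetric])
  also have "\<dots> = (\<Sum>s<b. \<Sum>u<d. g s u)"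
  proof (rule sum.cong[OF refl])
    fix s
    have "(\<Sum>t\<in>{s * d..<s * d + d}. g (t div d) (t mod d))
        = (\<Sum>u\<in>{0..<d}. g ((u + s * d) div d) ((u + s * d) mod d))"
      by (subst sum.shift_bounds_nat_ivl[symmetric]) (simp add: add.commute)
    also have "\<dots> = (\<Sum>u<d. g s u)"
      by (rule sum.cong) auto
    finally show "(\<Sum>t\<in>{s * d..<s * d + d}. g (t div d) (t mod d)) = (\<Sum>u<d. g s u)" .
  qed
  finally show ?thesis .
qed

lemma dim_kron_mat [simp]:
  "dim_row (kron_mat A B) = dim_row A * dim_row B"
  "dim_col (kron_mat A B) = dim_col A * dim_col B"
  unfolding kron_mat_def by auto

lemma kron_mat_carrier [simp]:
  "A \<in> carrier_mat a b \<Longrightarrow> B \<in> carrier_mat c d \<Longrightarrow> kron_mat A B \<in> carrier_mat (a * c) (b * d)"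
  by auto

lemma index_kron_mat [simp]:
  "i < dim_row A * dim_row B \<Longrightarrow> j < dim_col A * dim_col B \<Longrightarrow>
    kron_mat A B $$ (i, j) = A $$ (i div dim_row B, j div dim_col B) * B $$ (i mod dim_row B, j mod dim_col B)"
  unfolding kron_mat_def by auto

lemma index_kron_mat_block:
  assumes "A \<in> carrier_mat m m'" "B \<in> carrier_mat k k'"
    and "i < m" "j < m'" "s < k" "t < k'"
  shows "kron_mat A B $$ (i * k + s, j * k' + t) = A $$ (i, j) * B $$ (s, t)"
  using assms block_index_less[of i m s k] block_index_less[of j m' t k'] by simp

lemma mult_kron_mat:
  fixes A :: "'a::comm_semiring_1 mat"
  assumes A: "A \<in> carrier_mat a b" and B: "B \<in> carrier_mat c d"
    and C: "C \<in> carrier_mat b e" and D: "D \<in> carrier_mat d f"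
  shows "kron_mat A B * kron_mat C D = kron_mat (A * C) (B * D)"
proof (rule eq_matI)
  fix i j assume "i < dim_row (kron_mat (A * C) (B * D))" "j < dim_col (kron_mat (A * C) (B * D))"
  then have i: "i < a * c" and j: "j < e * f" using A B C D by auto
  have "(kron_mat A B * kron_mat C D) $$ (i, j) = (\<Sum>t<b * d.
      A $$ (i div c, t div d) * B $$ (i mod c, t mod d) * (C $$ (t div d, j div f) * D $$ (t mod d, j mod f)))"
    using A B C D i j by (auto simp: scalar_prod_def atLeast0LessThan intro!: sum.cong)
  also have "\<dots> = (\<Sum>s<b. \<Sum>u<d. A $$ (i div c, s) * B $$ (i mod c, u) * (C $$ (s, j div f) * D $$ (u, j mod f)))"
    by (rule sum_lessThan_mult_div_mod)
  also have "\<dots> = (\<Sum>s<b. A $$ (i div c, s) * C $$ (s, j div f)) * (\<Sum>u<d. B $$ (i mod c, u) * D $$ (u, j mod f))"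
    by (simp add: sum_product mult_ac)
  also have "\<dots> = kron_mat (A * C) (B * D) $$ (i, j)"
    using A B C D i j less_mult_imp_div_less[OF i] less_mult_imp_div_less[OF j]
      less_mult_imp_mod_less[OF i] less_mult_imp_mod_less[OF j]
    by (simp add: scalar_prod_def atLeast0LessThan)
  finally show "(kron_mat A B * kron_mat C D) $$ (i, j) = kron_mat (A * C) (B * D) $$ (i, j)" .
qed (use A B C D in auto)

lemma kron_mat_one: "kron_mat (1\<^sub>m a :: 'a::semiring_1 mat) (1\<^sub>m b) = 1\<^sub>m (a * b)"
proof (rule eq_matI)
  fix i j assume "i < dim_row (1\<^sub>m (a * b) :: 'a mat)" "j < dim_col (1\<^sub>m (a * b) :: 'a mat)"
  then have i: "i < a * b" and j: "j < a * b" by auto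
  have "(i div b = j div b \<and> i mod b = j mod b) \<longleftrightarrow> i = j"
    by (metis div_mult_mod_eq)
  then show "kron_mat (1\<^sub>m a) (1\<^sub>m b) $$ (i, j) = (1\<^sub>m (a * b) :: 'a mat) $$ (i, j)"
    using i j less_mult_imp_div_less[OF i] less_mult_imp_div_less[OF j]
      less_mult_imp_mod_less[OF i] less_mult_imp_mod_less[OF j] by auto
qed auto

lemma kron_mat_eq_one_mat:
  fixes A :: "'a::comm_semiring_1 mat"
  assumes A: "A \<in> carrier_mat m m" and B: "B \<in> carrier_mat k k" and "0 < m" "0 < k"
    and AB: "kron_mat A B = 1\<^sub>m (m * k)"
  shows "B $$ (0, 0) \<cdot>\<^sub>m A = 1\<^sub>m m" "A $$ (0, 0) \<cdot>\<^sub>m B = 1\<^sub>m k"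
proof -
  have entry: "A $$ (i, j) * B $$ (s, t) = (if i = j \<and> s = t then 1 else 0)"
    if "i < m" "j < m" "s < k" "t < k" for i j s t
  proof -
    have "i * k + s = j * k + t \<longleftrightarrow> i = j \<and> s = t"
      using that by (metis add_diff_cancel_left' add_right_cancel mod_mult_self3 mod_less
          nonzero_mult_div_cancel_right div_mult_self3 div_less neq0_conv not_less_zero plus_nat.add_0)
    then show ?thesis
      using index_kron_mat_block[OF A B that] AB that block_index_less[of i m s k] block_index_less[of j m t k]
      by auto
  qed
  show "B $$ (0, 0) \<cdot>\<^sub>m A = 1\<^sub>m m"
    by (rule eq_matI) (use A entry[of _ _ 0 0] \<open>0 < k\<close> in \<open>auto simp: mult.commute\<close>)
  show "A $$ (0, 0) \<cdot>\<^sub>m B = 1\<^sub>m k"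
    by (rule eq_matI) (use B entry[of 0 0] \<open>0 < m\<close> in auto)
qed

lemma (in vec_space) rank_lt_if_not_distinct_cols:
  assumes A: "A \<in> carrier_mat n nc" and "\<not> distinct (cols A)"
  shows "rank A < nc"
proof -
  obtain S where S: "maximal S (\<lambda>T. T \<subseteq> set (cols A) \<and> lin_indpt T)"
    using maximal_exists[of "\<lambda>T. T \<subseteq> set (cols A) \<and> lin_indpt T" "card (set (cols A))" "{}"]
    by (meson List.finite_set card_mono empty_iff empty_subsetI finite_lin_indpt2 rev_finite_subset)
  then have "card S \<le> card (set (cols A))" by (simp add: card_mono maximal_def)
  also have "\<dots> < nc"
    using A \<open>\<not> distinct (cols A)\<close> card_distinct card_length cols_length nat_less_le
    by (metis carrier_matD(2))
  finally show ?thesis using rank_card_indpt[OF A S] by simp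
qed

lemma (in vec_space) mult_vec_eq_0_if_full_col_rank:
  assumes A: "A \<in> carrier_mat n nc" and rank: "rank A = nc"
    and v: "v \<in> carrier_vec nc" and Av: "A *\<^sub>v v = 0\<^sub>v n"
  shows "v = 0\<^sub>v nc"
proof (rule ccontr)
  assume v0: "v \<noteq> 0\<^sub>v nc"
  have "distinct (cols A)" using rank_lt_if_not_distinct_cols[OF A] rank by auto
  with full_rank_lin_indpt[OF A rank] lin_depI[OF A v v0 Av] show False by blast
qed

lemma full_col_rank_left_inverse:
  fixes A :: "real mat"
  assumes A: "A \<in> carrier_mat n nc" and rank: "vec_space.rank n A = nc"
  obtains L where "L \<in> carrier_mat nc n" "L * A = 1\<^sub>m nc"
proof -
  define G where "G = transpose_mat A * A"
  have G: "G \<in> carrier_mat nc nc" unfolding G_def using A by auto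
  have "det G \<noteq> 0"
  proof
    assume "det G = 0"
    then obtain v where v: "v \<in> carrier_vec nc" "v \<noteq> 0\<^sub>v nc" "G *\<^sub>v v = 0\<^sub>v nc"
      using det_0_iff_vec_prod_zero_field[OF G] by blast
    have "(A *\<^sub>v v) \<bullet> (A *\<^sub>v v) = (transpose_mat A *\<^sub>v (A *\<^sub>v v)) \<bullet> v"
      by (rule transpose_vec_mult_scalar[symmetric]) (use A v in auto)
    also have "\<dots> = 0"
      using v A unfolding G_def by (metis assoc_mult_mat_vec scalar_prod_left_zero transpose_carrier_mat)
    finally have "A *\<^sub>v v = 0\<^sub>v n"
      using conjugate_square_eq_0_vec[OF mult_mat_vec_carrier[OF A v(1)]] by simp
    then show False using vec_space.mult_vec_eq_0_if_full_col_rank[OF A rank v(1)] v(2) by simp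
  qed
  then obtain C where C: "C \<in> carrier_mat nc nc" "C * G = 1\<^sub>m nc"
    using det_non_zero_imp_unit[OF G, of "()"] unfolding Units_def ring_mat_def by auto
  have "(C * transpose_mat A) * A = C * G"
    unfolding G_def using C A by (metis assoc_mult_mat transpose_carrier_mat)
  with C A show thesis by (intro that[of "C * transpose_mat A"]) auto
qed

lemma invertible_mat_if_right_inverse:
  fixes A :: "'a::comm_ring_1 mat"
  assumes A: "A \<in> carrier_mat n n" and B: "B \<in> carrier_mat n n" and AB: "A * B = 1\<^sub>m n"
  shows "invertible_mat A"
proof -
  have det: "det B * det A = 1"
    using det_mult[OF A B] AB by (simp add: mult.commute)
  define C where "C = det B \<cdot>\<^sub>m adj_mat A"
  have C: "C \<in> carrier_mat n n" unfolding C_def using adj_mat(1)[OF A] by simp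
  have scale: "det B \<cdot>\<^sub>m (det A \<cdot>\<^sub>m 1\<^sub>m n) = 1\<^sub>m n"
    using det by (intro eq_matI) auto
  have AC: "A * C = 1\<^sub>m n"
    unfolding C_def mult_smult_distrib[OF A adj_mat(1)[OF A]] adj_mat(2)[OF A] scale ..
  have CA: "C * A = 1\<^sub>m n"
    unfolding C_def mult_smult_assoc_mat[OF adj_mat(1)[OF A] A] adj_mat(3)[OF A] scale ..
  have "inverts_mat A C" "inverts_mat C A"
    unfolding inverts_mat_def using A C AC CA by auto
  then show ?thesis
    unfolding invertible_mat_def using A by auto
qed

lemma invertible_mat_obtain_inverse:
  assumes "invertible_mat A" "A \<in> carrier_mat n n"
  obtains B where "B \<in> carrier_mat n n" "A * B = 1\<^sub>m n"
proof -
  from assms obtain B where AB: "A * B = 1\<^sub>m n" and BA: "B * A = 1\<^sub>m (dim_row B)"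
    unfolding invertible_mat_def inverts_mat_def by auto
  have "B \<in> carrier_mat n n"
    using arg_cong[OF AB, of dim_col] arg_cong[OF BA, of dim_col] assms(2) by auto
  with AB show thesis by (intro that)
qed

lemma invertible_kron_mat_factors:
  fixes A :: "'a::comm_ring_1 mat"
  assumes A: "A \<in> carrier_mat m m" and B: "B \<in> carrier_mat k k"
    and C: "C \<in> carrier_mat m m" and D: "D \<in> carrier_mat k k" and "0 < m" "0 < k"
    and inv: "kron_mat A B * kron_mat C D = 1\<^sub>m (m * k)"
  shows "invertible_mat A" "invertible_mat B"
proof -
  have one: "kron_mat (A * C) (B * D) = 1\<^sub>m (m * k)"
    using inv unfolding mult_kron_mat[OF A B C D] .
  have AC: "A * C \<in> carrier_mat m m" and BD: "B * D \<in> carrier_mat k k" using A B C D by auto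
  note scaled = kron_mat_eq_one_mat[OF AC BD \<open>0 < m\<close> \<open>0 < k\<close> one]
  have "A * ((B * D) $$ (0, 0) \<cdot>\<^sub>m C) = 1\<^sub>m m"
    unfolding mult_smult_distrib[OF A C] by (rule scaled(1))
  then show "invertible_mat A" by (rule invertible_mat_if_right_inverse[OF A smult_carrier_mat[OF C]])
  have "B * ((A * C) $$ (0, 0) \<cdot>\<^sub>m D) = 1\<^sub>m k"
    unfolding mult_smult_distrib[OF B D] by (rule scaled(2))
  then show "invertible_mat B" by (rule invertible_mat_if_right_inverse[OF B smult_carrier_mat[OF D]])
qed

lemma kron_mat_eq_if_left_inverses:
  fixes A0 :: "'a::comm_semiring_1 mat"
  assumes La: "La \<in> carrier_mat m na" "La * A0 = 1\<^sub>m m"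
    and Lb: "Lb \<in> carrier_mat k nb" "Lb * B0 = 1\<^sub>m k"
    and A0: "A0 \<in> carrier_mat na m" and B0: "B0 \<in> carrier_mat nb k"
    and A1: "A1 \<in> carrier_mat na m'" and B1: "B1 \<in> carrier_mat nb k'"
    and G: "G \<in> carrier_mat (m * k) c"
    and eq: "kron_mat A0 B0 * G = kron_mat A1 B1"
  shows "G = kron_mat (La * A1) (Lb * B1)"
proof -
  have left_inv: "kron_mat La Lb * kron_mat A0 B0 = 1\<^sub>m (m * k)"
    using mult_kron_mat[OF La(1) Lb(1) A0 B0] La(2) Lb(2) kron_mat_one by simp
  have "G = (kron_mat La Lb * kron_mat A0 B0) * G" using left_inv G by simp
  also have "\<dots> = kron_mat La Lb * (kron_mat A0 B0 * G)"
    using La Lb A0 B0 G by (intro assoc_mult_mat) auto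
  also have "\<dots> = kron_mat (La * A1) (Lb * B1)"
    unfolding eq by (rule mult_kron_mat[OF La(1) Lb(1) A1 B1])
  finally show ?thesis .
qed

lemma int_set_diff_closed_generator:
  fixes T :: "int set"
  assumes closed: "\<And>a b q. a \<in> T \<Longrightarrow> b \<in> T \<Longrightarrow> a - q * b \<in> T"
    and z: "z \<in> T" "z \<noteq> 0"
  obtains d where "d \<in> T" "0 < d" "\<And>w. w \<in> T \<Longrightarrow> d dvd w"
proof -
  have "\<bar>z\<bar> \<in> T"
    using z closed[OF z(1) z(1), of 2] by (cases "0 \<le> z") simp_all
  then obtain d where d: "d \<in> T" "0 < d" and least: "\<And>e. e \<in> T \<Longrightarrow> 0 < e \<Longrightarrow> nat d \<le> nat e"
    using ex_has_least_nat[of "\<lambda>d. d \<in> T \<and> 0 < d" "\<bar>z\<bar>" nat] z(2) by auto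
  have "d dvd w" if w: "w \<in> T" for w
  proof -
    have "w mod d \<in> T"
      using closed[OF w d(1), of "w div d"] by (simp add: minus_div_mult_eq_mod)
    moreover have "0 \<le> w mod d" "w mod d < d" using d(2) by simp_all
    ultimately have "w mod d = 0" using least[of "w mod d"] by fastforce
    then show ?thesis by (simp add: dvd_eq_mod_eq_0)
  qed
  with d show thesis by (rule that)
qed

lemma rescale_products_to_Ints:
  fixes p :: "'i \<Rightarrow> real" and q :: "'j \<Rightarrow> real"
  assumes ints: "\<And>x y. x \<in> I \<Longrightarrow> y \<in> J \<Longrightarrow> p x * q y \<in> \<int>"
    and x0: "x0 \<in> I" and y0: "y0 \<in> J" and nz: "p x0 * q y0 \<noteq> 0"
  obtains c where "c \<noteq> 0" "\<And>x. x \<in> I \<Longrightarrow> c * p x \<in> \<int>" "\<And>y. y \<in> J \<Longrightarrow> q y / c \<in> \<int>"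
proof -
  have px0: "p x0 \<noteq> 0" using nz by auto
  define T where "T = {z::int. \<forall>x\<in>I. of_int z / p x0 * p x \<in> \<int>}"
  have closed: "a - r * b \<in> T" if ab: "a \<in> T" "b \<in> T" for a b r
  proof -
    have "of_int (a - r * b) / p x0 * p x \<in> \<int>" if x: "x \<in> I" for x
    proof -
      have "of_int a / p x0 * p x \<in> \<int>" "of_int b / p x0 * p x \<in> \<int>"
        using ab x unfolding T_def by auto
      then have "of_int a / p x0 * p x - of_int r * (of_int b / p x0 * p x) \<in> \<int>"
        by (intro Ints_diff Ints_mult[OF Ints_of_int])
      also have "of_int a / p x0 * p x - of_int r * (of_int b / p x0 * p x) = of_int (a - r * b) / p x0 * p x"
        using px0 by (simp add: field_simps)
      finally show ?thesis .
    qed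
    then show ?thesis unfolding T_def by blast
  qed
  define z where "z y = \<lfloor>p x0 * q y\<rfloor>" for y
  have z: "of_int (z y) = p x0 * q y" if "y \<in> J" for y
    using ints[OF x0 that] unfolding z_def by (auto elim: Ints_cases)
  have zT: "z y \<in> T" if "y \<in> J" for y
  proof -
    have "of_int (z y) / p x0 * p x = p x * q y" for x
      using z[OF that] px0 by simp
    then show ?thesis using ints that unfolding T_def by auto
  qed
  have "z y0 \<noteq> 0" using z[OF y0] nz by auto
  then obtain d where d: "d \<in> T" "0 < d" and dvd: "\<And>w. w \<in> T \<Longrightarrow> d dvd w"
    using int_set_diff_closed_generator[OF closed zT[OF y0]] by blast
  show thesis
  proof (rule that[of "of_int d / p x0"])
    show "of_int d / p x0 \<noteq> 0" using d(2) px0 by simp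
    show "of_int d / p x0 * p x \<in> \<int>" if "x \<in> I" for x
      using d(1) that unfolding T_def by auto
    show "q y / (of_int d / p x0) \<in> \<int>" if "y \<in> J" for y
    proof -
      have "q y / (of_int d / p x0) = of_int (z y) / of_int d"
        using z[OF that] px0 by simp
      also have "\<dots> = of_int (z y div d)"
        using dvd[OF zT[OF that]] by (simp add: real_of_int_div)
      finally show ?thesis by simp
    qed
  qed
qed

lemma int_mat_kron_if_rescaled_Ints:
  fixes G :: "int mat" and P Q :: "real mat"
  assumes G: "G \<in> carrier_mat (m * k) (m' * k')"
    and P: "P \<in> carrier_mat m m'" and Q: "Q \<in> carrier_mat k k'"
    and GPQ: "map_mat real_of_int G = kron_mat P Q" and "c \<noteq> 0"
    and cP: "\<And>i j. i < m \<Longrightarrow> j < m' \<Longrightarrow> c * P $$ (i, j) \<in> \<int>"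
    and Qc: "\<And>s t. s < k \<Longrightarrow> t < k' \<Longrightarrow> Q $$ (s, t) / c \<in> \<int>"
  shows "G = kron_mat (mat m m' (\<lambda>x. \<lfloor>c * P $$ x\<rfloor>)) (mat k k' (\<lambda>y. \<lfloor>Q $$ y / c\<rfloor>))"
    (is "G = kron_mat ?G1 ?G2")
proof (rule eq_matI)
  fix a b assume "a < dim_row (kron_mat ?G1 ?G2)" "b < dim_col (kron_mat ?G1 ?G2)"
  then have a: "a < m * k" and b: "b < m' * k'" by auto
  note bounds = less_mult_imp_div_less[OF a] less_mult_imp_div_less[OF b]
    less_mult_imp_mod_less[OF a] less_mult_imp_mod_less[OF b]
  have G1: "real_of_int (?G1 $$ (a div k, b div k')) = c * P $$ (a div k, b div k')"
    using cP[OF bounds(1,2)] bounds by (auto elim: Ints_cases)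
  have G2: "real_of_int (?G2 $$ (a mod k, b mod k')) = Q $$ (a mod k, b mod k') / c"
    using Qc[OF bounds(3,4)] bounds by (auto elim: Ints_cases)
  have "real_of_int (G $$ (a, b)) = P $$ (a div k, b div k') * Q $$ (a mod k, b mod k')"
    using arg_cong[OF GPQ, of "\<lambda>M. M $$ (a, b)"] a b G P Q by simp
  also have "\<dots> = (c * P $$ (a div k, b div k')) * (Q $$ (a mod k, b mod k') / c)"
    using \<open>c \<noteq> 0\<close> by simp
  also have "\<dots> = real_of_int (kron_mat ?G1 ?G2 $$ (a, b))"
    using a b G1 G2 by simp
  finally show "G $$ (a, b) = kron_mat ?G1 ?G2 $$ (a, b)" by linarith
qed (use G in auto)

lemma int_mat_kron_if_real_kron:
  fixes G :: "int mat" and P Q :: "real mat"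
  assumes G: "G \<in> carrier_mat (m * k) (m' * k')"
    and P: "P \<in> carrier_mat m m'" and Q: "Q \<in> carrier_mat k k'"
    and GPQ: "map_mat real_of_int G = kron_mat P Q"
  obtains G1 G2 where "G1 \<in> carrier_mat m m'" "G2 \<in> carrier_mat k k'" "G = kron_mat G1 G2"
proof -
  consider "\<forall>a < m * k. \<forall>b < m' * k'. G $$ (a, b) = 0"
    | a b where "a < m * k" "b < m' * k'" "G $$ (a, b) \<noteq> 0" by blast
  then show thesis
  proof cases
    case 1
    have "G = kron_mat (0\<^sub>m m m') (0\<^sub>m k k')"
      using 1 G less_mult_imp_div_less less_mult_imp_mod_less by (intro eq_matI) auto
    then show thesis by (intro that) auto
  next
    case (2 a b)
    let ?I = "{..<m} \<times> {..<m'}" and ?J = "{..<k} \<times> {..<k'}"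
    have entry: "real_of_int (G $$ (i * k + s, j * k' + t)) = P $$ (i, j) * Q $$ (s, t)"
      if "i < m" "j < m'" "s < k" "t < k'" for i j s t
      using index_kron_mat_block[OF P Q that] arg_cong[OF GPQ, of "\<lambda>M. M $$ (i * k + s, j * k' + t)"]
        block_index_less[of i m s k] block_index_less[of j m' t k'] G that
      by simp
    have ints: "P $$ x * Q $$ y \<in> \<int>" if "x \<in> ?I" "y \<in> ?J" for x y
      using that entry[symmetric] by (cases x; cases y) auto
    have x0: "(a div k, b div k') \<in> ?I" and y0: "(a mod k, b mod k') \<in> ?J"
      using 2 less_mult_imp_div_less less_mult_imp_mod_less by auto
    have "P $$ (a div k, b div k') * Q $$ (a mod k, b mod k') \<noteq> 0"
      using entry[of "a div k" "b div k'" "a mod k" "b mod k'"] x0 y0 2(3) by (metis SigmaE2 lessThan_iff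
          div_mult_mod_eq of_int_eq_0_iff)
    then obtain c where "c \<noteq> 0" "\<And>x. x \<in> ?I \<Longrightarrow> c * P $$ x \<in> \<int>" "\<And>y. y \<in> ?J \<Longrightarrow> Q $$ y / c \<in> \<int>"
      using rescale_products_to_Ints[where p = "\<lambda>x. P $$ x" and q = "\<lambda>y. Q $$ y", OF ints x0 y0]
      by blast
    then have "G = kron_mat (mat m m' (\<lambda>x. \<lfloor>c * P $$ x\<rfloor>)) (mat k k' (\<lambda>y. \<lfloor>Q $$ y / c\<rfloor>))"
      by (intro int_mat_kron_if_rescaled_Ints[OF G P Q GPQ]) auto
    then show thesis by (intro that) auto
  qed
qed

lemma Y_set_carrier: "M \<in> Y_set n m \<Longrightarrow> M \<in> carrier_mat (n * n) (m * (n - m))"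
  unfolding Y_set_def by auto

lemma Y_setE:
  assumes "M \<in> Y_set n m" "m \<le> n"
  obtains A B where "M = kron_mat A B" "A \<in> carrier_mat n m" "B \<in> carrier_mat n (n - m)"
    "vec_space.rank n A = m" "vec_space.rank n B = n - m"
  using assms unfolding Y_set_def full_rank_def by auto

lemma Y_set_mult_imp_kron:
  assumes M: "M \<in> Y_set n m" and MG: "M * G \<in> Y_set n m" and "m \<le> n"
    and G: "G \<in> carrier_mat (m * (n - m)) (m * (n - m))"
  obtains P Q where "P \<in> carrier_mat m m" "Q \<in> carrier_mat (n - m) (n - m)" "G = kron_mat P Q"
proof -
  obtain A0 B0 where M0: "M = kron_mat A0 B0" and A0: "A0 \<in> carrier_mat n m"
    and B0: "B0 \<in> carrier_mat n (n - m)" and rank: "vec_space.rank n A0 = m" "vec_space.rank n B0 = n - m"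
    using Y_setE[OF M \<open>m \<le> n\<close>] by metis
  obtain A1 B1 where M1: "M * G = kron_mat A1 B1" and A1: "A1 \<in> carrier_mat n m"
    and B1: "B1 \<in> carrier_mat n (n - m)"
    using Y_setE[OF MG \<open>m \<le> n\<close>] by metis
  obtain La where La: "La \<in> carrier_mat m n" "La * A0 = 1\<^sub>m m"
    using full_col_rank_left_inverse[OF A0 rank(1)] by blast
  obtain Lb where Lb: "Lb \<in> carrier_mat (n - m) n" "Lb * B0 = 1\<^sub>m (n - m)"
    using full_col_rank_left_inverse[OF B0 rank(2)] by blast
  have "G = kron_mat (La * A1) (Lb * B1)"
    using kron_mat_eq_if_left_inverses[OF La Lb A0 B0 A1 B1 G] M0 M1 by simp
  then show thesis using La Lb A1 B1 by (intro that) auto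
qed

lemma Y_set_mult_int_imp_kron:
  fixes G :: "int mat"
  assumes "M \<in> Y_set n m" "M * map_mat real_of_int G \<in> Y_set n m" "m \<le> n"
    and G: "G \<in> carrier_mat (m * (n - m)) (m * (n - m))"
  obtains G1 G2 where "G1 \<in> carrier_mat m m" "G2 \<in> carrier_mat (n - m) (n - m)" "G = kron_mat G1 G2"
proof -
  obtain P Q where "P \<in> carrier_mat m m" "Q \<in> carrier_mat (n - m) (n - m)"
    "map_mat real_of_int G = kron_mat P Q"
    using Y_set_mult_imp_kron[OF assms(1-3)] G by auto
  with int_mat_kron_if_real_kron[OF G] that show thesis by metis
qed

theorem mainTheorem11:
  fixes n m :: nat and A B :: "real mat" and \<gamma> :: "int mat"
  assumes "1 \<le> m" and "m \<le> n - 1"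
    and "kron_mat A B \<in> Y_set n m"
    and "\<gamma> \<in> GL_int (m * (n - m))"
    and "kron_mat A B * map_mat real_of_int \<gamma> \<in> Y_set n m"
  shows "\<exists>\<gamma>1 \<gamma>2. \<gamma>1 \<in> GL_int m \<and> \<gamma>2 \<in> GL_int (n - m) \<and> \<gamma> = kron_mat \<gamma>1 \<gamma>2"
proof -
  let ?k = "n - m" and ?M = "kron_mat A B" and ?r = "map_mat real_of_int"
  have "m \<le> n" "0 < m" "0 < ?k" using assms(1,2) by auto
  have \<gamma>: "\<gamma> \<in> carrier_mat (m * ?k) (m * ?k)" "invertible_mat \<gamma>"
    using assms(4) unfolding GL_int_def by auto
  then obtain \<delta> where \<delta>: "\<delta> \<in> carrier_mat (m * ?k) (m * ?k)" "\<gamma> * \<delta> = 1\<^sub>m (m * ?k)"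
    using invertible_mat_obtain_inverse by metis
  have M: "?M \<in> carrier_mat (n * n) (m * ?k)" using Y_set_carrier[OF assms(3)] .
  have "?M * ?r \<gamma> * ?r \<delta> = ?M * ?r (\<gamma> * \<delta>)"
    using M \<gamma>(1) \<delta>(1) by (simp add: of_int_hom.mat_hom_mult assoc_mult_mat[of _ "n * n" "m * ?k"])
  also have "\<dots> = ?M" using right_mult_one_mat[OF M] \<delta>(2) by (simp add: of_int_hom.mat_hom_one)
  finally have inverse_step: "?M * ?r \<gamma> * ?r \<delta> \<in> Y_set n m" using assms(3) by simp
  obtain \<gamma>1 \<gamma>2 where \<gamma>12: "\<gamma>1 \<in> carrier_mat m m" "\<gamma>2 \<in> carrier_mat ?k ?k" "\<gamma> = kron_mat \<gamma>1 \<gamma>2"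
    using Y_set_mult_int_imp_kron[OF assms(3,5) \<open>m \<le> n\<close> \<gamma>(1)] .
  obtain \<delta>1 \<delta>2 where \<delta>12: "\<delta>1 \<in> carrier_mat m m" "\<delta>2 \<in> carrier_mat ?k ?k" "\<delta> = kron_mat \<delta>1 \<delta>2"
    using Y_set_mult_int_imp_kron[OF assms(5) inverse_step \<open>m \<le> n\<close> \<delta>(1)] .
  have "invertible_mat \<gamma>1" "invertible_mat \<gamma>2"
    using invertible_kron_mat_factors[OF \<gamma>12(1,2) \<delta>12(1,2) \<open>0 < m\<close> \<open>0 < ?k\<close>] \<gamma>12(3) \<delta>12(3) \<delta>(2)
    by simp_all
  with \<gamma>12 show ?thesis unfolding GL_int_def by auto
qed

end
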